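(* Let $\overrightarrow{C}=\bigcup_{j=1}^t m_j\overrightarrow{C_{n_j}}$ be an oriented 2-regular graph with at least two cycle components, where $n_1<n_2<\dots<n_t$ are the distinct cycle lengths, $m_j\ge1$ is the number of components of length $n_j$, and $\sum_j m_j\ge2$. Let $2\le k\le n_1-1$ be such that $\{k\}$ is a distance set of $\overrightarrow{C}$. Then $\overrightarrow{C}$ is $\{k\}$-antimagic if and only if it is unidirectional.
   Context: An oriented graph is a simple graph each of whose edges is given one direction (an arc $(u,v)$ goes from $u$ to $v$). For vertices $u,v$, $d(u,v)$ is the length of a shortest directed path from $u$ to $v$ ($d(u,u)=0$, $\infty$ if no path). A distance set of an oriented graph is a nonempty set $D$ of nonnegative integers each of which is a finite distance $d(u,v)$ for some pair of vertices. $N_D(v)=\{y : d(v,y)\in D\}$; for a bijection $f:V\to\{1,\dots,|V|\}$, $\omega_D(v)=\sum_{x\in N_D(v)}f(x)$ (empty sum $0$); $f$ is $D$-antimagic if distinct vertices have distinct $D$-weights, and the graph is $D$-antimagic if such an $f$ exists. An oriented 2-regular graph is an orientation of a disjoint union of cycles, each of length at least $3$. A cycle component on $v_1,\dots,v_n$ is unidirectional if (up to relabeling) its arcs are $(v_i,v_{i+1})$, $1\le i\le n-1$, and $(v_n,v_1)$; the oriented 2-regular graph is unidirectional if every cycle component is unidirectional. *)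

theory Defs
  imports Main
begin

text \<open>An oriented graph is given by an arc set A on a vertex set.
  Directed distance: length of a shortest directed walk (= shortest path);
  None encodes infinity.\<close>
definition odist :: "('a \<times> 'a) set \<Rightarrow> 'a \<Rightarrow> 'a \<Rightarrow> nat option" where
  "odist A u v = (if \<exists>n. (u, v) \<in> A ^^ n then Some (LEAST n. (u, v) \<in> A ^^ n) else None)"

definition is_distance_set :: "'a set \<Rightarrow> ('a \<times> 'a) set \<Rightarrow> nat set \<Rightarrow> bool" where
  "is_distance_set V A D \<longleftrightarrow> D \<noteq> {} \<and> (\<forall>d\<in>D. \<exists>u\<in>V. \<exists>v\<in>V. odist A u v = Some d)"

definition D_neighbourhood :: "'a set \<Rightarrow> ('a \<times> 'a) set \<Rightarrow> nat set \<Rightarrow> 'a \<Rightarrow> 'a set" where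
  "D_neighbourhood V A D v = {y \<in> V. \<exists>d\<in>D. odist A v y = Some d}"

definition D_weight :: "'a set \<Rightarrow> ('a \<times> 'a) set \<Rightarrow> nat set \<Rightarrow> ('a \<Rightarrow> nat) \<Rightarrow> 'a \<Rightarrow> nat" where
  "D_weight V A D f v = (\<Sum>x\<in>D_neighbourhood V A D v. f x)"

definition D_antimagic :: "'a set \<Rightarrow> ('a \<times> 'a) set \<Rightarrow> nat set \<Rightarrow> bool" where
  "D_antimagic V A D \<longleftrightarrow>
     (\<exists>f. bij_betw f V {1..card V} \<and> inj_on (D_weight V A D f) V)"

text \<open>A cycle component is given by a list of distinct vertices v_1..v_n;
  its (undirected) edges are {v_i, v_(i+1)} and {v_n, v_1}, recorded as pairs.\<close>
definition cycle_edges :: "'a list \<Rightarrow> ('a \<times> 'a) set" where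
  "cycle_edges c = {(c ! i, c ! ((i + 1) mod length c)) | i. i < length c}"

definition verts :: "'a list list \<Rightarrow> 'a set" where
  "verts cs = (\<Union>c\<in>set cs. set c)"

definition oriented_2regular :: "'a list list \<Rightarrow> ('a \<times> 'a) set \<Rightarrow> bool" where
  "oriented_2regular cs A \<longleftrightarrow>
     (\<forall>c\<in>set cs. distinct c \<and> 3 \<le> length c) \<and>
     (\<forall>i<length cs. \<forall>j<length cs. i \<noteq> j \<longrightarrow> set (cs ! i) \<inter> set (cs ! j) = {}) \<and>
     (let E = (\<Union>c\<in>set cs. cycle_edges c) in
        A \<subseteq> E \<union> E\<inverse> \<and> (\<forall>(u, v)\<in>E. (u, v) \<in> A \<or> (v, u) \<in> A) \<and> A \<inter> A\<inverse> = {})"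

definition unidirectional :: "'a list list \<Rightarrow> ('a \<times> 'a) set \<Rightarrow> bool" where
  "unidirectional cs A \<longleftrightarrow> (\<forall>c\<in>set cs. cycle_edges c \<subseteq> A \<or> (cycle_edges c)\<inverse> \<subseteq> A)"

end

theory Submission
  imports Defs
begin

(*
  Index each cycle of length n by the integers modulo n.  If every cycle is directed, the only
  vertex at distance k < n from v_i is v_(i+k) (or v_(i-k)), so all {k}-neighbourhoods are
  singletons and v \<mapsto> N_k(v) is injective; then every labelling is {k}-antimagic.  If some
  cycle is not directed, its orientation switches somewhere, which produces a sink; a second
  vertex from which no directed walk of length 2 starts lies next to this sink or is a further
  sink.  For k \<ge> 2 both vertices have empty {k}-neighbourhood and hence weight 0.
*)

lemma odist_SomeD: "odist A u v = Some d \<Longrightarrow> (u, v) \<in> A ^^ d"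
  unfolding odist_def by (auto split: if_splits intro: LeastI_ex)

lemma D_neighbourhood_eq_empty_if_no_2walk:
  assumes "A `` A `` {x} = {}" and "\<forall>d\<in>D. 2 \<le> d"
  shows "D_neighbourhood V A D x = {}"
proof -
  have "(x, y) \<notin> A ^^ d" if "2 \<le> d" for y d
  proof
    assume "(x, y) \<in> A ^^ d"
    moreover have "A ^^ d = A ^^ 2 O A ^^ (d - 2)"
      using that by (metis le_add_diff_inverse relpow_add)
    ultimately have "(x, y) \<in> A ^^ 2 O A ^^ (d - 2)" by simp
    then show False using assms(1) by (auto simp: numeral_2_eq_2 relcomp_unfold)
  qed
  then show ?thesis
    using assms(2) unfolding D_neighbourhood_def by (auto dest: odist_SomeD)
qed

lemma not_D_antimagic_if_two_empty_neighbourhoods: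
  assumes "x \<in> V" "y \<in> V" "x \<noteq> y"
    and "D_neighbourhood V A D x = {}" "D_neighbourhood V A D y = {}"
  shows "\<not> D_antimagic V A D"
  using assms unfolding D_antimagic_def D_weight_def by (metis inj_onD)

lemma D_antimagic_if_singleton_neighbourhoods:
  assumes "finite V"
    and "\<forall>v\<in>V. is_singleton (D_neighbourhood V A D v)"
    and "inj_on (D_neighbourhood V A D) V"
  shows "D_antimagic V A D"
proof -
  let ?N = "D_neighbourhood V A D"
  obtain f where f: "bij_betw f V {1..card V}"
    using finite_same_card_bij[OF assms(1), of "{1..card V}"] by auto
  have weight: "D_weight V A D f v = f (the_elem (?N v))" if "v \<in> V" for v
    using assms(2) that unfolding D_weight_def by (auto simp: is_singleton_def)
  have "inj_on (D_weight V A D f) V"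
  proof (rule inj_onI)
    fix u v assume uv: "u \<in> V" "v \<in> V" "D_weight V A D f u = D_weight V A D f v"
    have "?N w \<subseteq> V" for w unfolding D_neighbourhood_def by auto
    then have "the_elem (?N u) \<in> V" "the_elem (?N v) \<in> V"
      using assms(2) uv(1,2) by (metis insert_subset is_singleton_the_elem)+
    then have "the_elem (?N u) = the_elem (?N v)"
      using uv weight bij_betw_imp_inj_on[OF f] by (metis inj_onD)
    then have "?N u = ?N v"
      using assms(2) uv(1,2) by (metis is_singleton_the_elem)
    then show "u = v" using assms(3) uv(1,2) by (simp add: inj_on_eq_iff)
  qed
  then show ?thesis unfolding D_antimagic_def using f by blast
qed

lemma ex_true_false_transition:
  fixes P :: "int \<Rightarrow> bool"
  assumes "P a" "\<not> P b" "a \<le> b"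
  shows "\<exists>s. a \<le> s \<and> s < b \<and> P s \<and> \<not> P (s + 1)"
  using assms(3,2)
proof (induction b rule: int_ge_induct)
  case base then show ?case using assms(1) by simp
next
  case (step b)
  then show ?case by (cases "P b") force+
qed

definition cycle_vertex :: "'a list \<Rightarrow> int \<Rightarrow> 'a" where
  "cycle_vertex c i = c ! nat (i mod int (length c))"

lemma cycle_vertex_in_set: "c \<noteq> [] \<Longrightarrow> cycle_vertex c i \<in> set c"
  unfolding cycle_vertex_def by (simp add: nat_less_iff)

lemma cycle_vertex_of_nat: "i < length c \<Longrightarrow> cycle_vertex c (int i) = c ! i"
  unfolding cycle_vertex_def by (simp flip: of_nat_mod)

lemma ex_cycle_vertex_eq: "x \<in> set c \<Longrightarrow> \<exists>i. x = cycle_vertex c i"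
  by (metis cycle_vertex_of_nat in_set_conv_nth)

lemma cycle_vertex_eq_iff:
  assumes "distinct c" "c \<noteq> []"
  shows "cycle_vertex c i = cycle_vertex c j \<longleftrightarrow> i mod int (length c) = j mod int (length c)"
  using assms unfolding cycle_vertex_def
  by (auto simp: nth_eq_iff_index_eq nat_less_iff nat_eq_iff2)

lemma cycle_vertex_add_mult_length: "cycle_vertex c (i + m * int (length c)) = cycle_vertex c i"
  unfolding cycle_vertex_def by simp

lemma cycle_vertex_neq:
  assumes "distinct c" "0 < j - i" "j - i < int (length c)"
  shows "cycle_vertex c i \<noteq> cycle_vertex c j"
proof
  assume "cycle_vertex c i = cycle_vertex c j"
  moreover have "c \<noteq> []" using assms(2,3) by auto
  ultimately have "int (length c) dvd j - i"
    using assms(1) by (metis cycle_vertex_eq_iff mod_eq_dvd_iff dvd_diff_commute)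
  then show False using assms(2,3) zdvd_imp_le by fastforce
qed

lemma cycle_vertex_add_cong:
  assumes "cycle_vertex c i = cycle_vertex c j" "distinct c" "c \<noteq> []"
  shows "cycle_vertex c (i + m) = cycle_vertex c (j + m)"
proof -
  have "i mod int (length c) = j mod int (length c)"
    using assms cycle_vertex_eq_iff by blast
  then have "(i + m) mod int (length c) = (j + m) mod int (length c)"
    by (rule mod_add_cong) simp
  then show ?thesis using assms(2,3) cycle_vertex_eq_iff by blast
qed

lemma cycle_vertex_of_nat_plus_1: "cycle_vertex c (int i + 1) = c ! ((i + 1) mod length c)"
proof -
  have "(int i + 1) mod int (length c) = int ((i + 1) mod length c)"
    by (simp add: zmod_int add.commute)
  then show ?thesis unfolding cycle_vertex_def by simp
qed

lemma cycle_edges_eq_range: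
  assumes "c \<noteq> []"
  shows "cycle_edges c = range (\<lambda>i. (cycle_vertex c i, cycle_vertex c (i + 1)))"
proof (intro set_eqI iffI)
  fix e assume "e \<in> cycle_edges c"
  then obtain i where "i < length c" "e = (c ! i, c ! ((i + 1) mod length c))"
    unfolding cycle_edges_def by blast
  then have "e = (cycle_vertex c (int i), cycle_vertex c (int i + 1))"
    by (simp add: cycle_vertex_of_nat cycle_vertex_of_nat_plus_1)
  then show "e \<in> range (\<lambda>i. (cycle_vertex c i, cycle_vertex c (i + 1)))" by blast
next
  fix e assume "e \<in> range (\<lambda>i. (cycle_vertex c i, cycle_vertex c (i + 1)))"
  then obtain i where e: "e = (cycle_vertex c i, cycle_vertex c (i + 1))" by blast
  define j where "j = nat (i mod int (length c))"
  have j: "j < length c" "int j = i mod int (length c)"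
    using assms unfolding j_def by (simp_all add: nat_less_iff)
  have "cycle_vertex c i = cycle_vertex c (int j)" "cycle_vertex c (i + 1) = cycle_vertex c (int j + 1)"
    unfolding j(2) cycle_vertex_def by (simp_all add: mod_add_left_eq)
  then have "e = (c ! j, c ! ((j + 1) mod length c))"
    using e j(1) by (simp add: cycle_vertex_of_nat cycle_vertex_of_nat_plus_1)
  then show "e \<in> cycle_edges c" unfolding cycle_edges_def using j(1) by blast
qed

lemma converse_cycle_edges_eq_range:
  assumes "c \<noteq> []"
  shows "(cycle_edges c)\<inverse> = range (\<lambda>i. (cycle_vertex c i, cycle_vertex c (i - 1)))"
proof -
  have "(cycle_vertex c (i + 1), cycle_vertex c i) = (cycle_vertex c (i + 1), cycle_vertex c (i + 1 - 1))" for i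
    by simp
  then show ?thesis unfolding cycle_edges_eq_range[OF assms] by auto
qed

definition forward_arc :: "('a \<times> 'a) set \<Rightarrow> 'a list \<Rightarrow> int \<Rightarrow> bool" where
  "forward_arc A c i \<longleftrightarrow> (cycle_vertex c i, cycle_vertex c (i + 1)) \<in> A"

lemma forward_arc_periodic: "forward_arc A c (i + m * int (length c)) = forward_arc A c i"
  using cycle_vertex_add_mult_length[of c i m] cycle_vertex_add_mult_length[of c "i + 1" m]
  unfolding forward_arc_def by (simp add: ac_simps)

definition cycle_direction :: "('a \<times> 'a) set \<Rightarrow> 'a list \<Rightarrow> int" where
  "cycle_direction A c = (if cycle_edges c \<subseteq> A then 1 else -1)"

context
  fixes cs :: "'a list list" and A :: "('a \<times> 'a) set"
  assumes oriented: "oriented_2regular cs A"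
begin

lemma cycle_distinct_length:
  assumes "c \<in> set cs"
  shows "distinct c" "3 \<le> length c"
  using oriented assms unfolding oriented_2regular_def by auto

lemma cycle_nonempty: "c \<in> set cs \<Longrightarrow> c \<noteq> []"
  using cycle_distinct_length(2) by fastforce

lemma cycles_eq_if_common_vertex:
  assumes "c \<in> set cs" "d \<in> set cs" "x \<in> set c" "x \<in> set d"
  shows "c = d"
proof -
  obtain i j where "i < length cs" "j < length cs" "c = cs ! i" "d = cs ! j"
    using assms(1,2) by (metis in_set_conv_nth)
  with oriented assms(3,4) show ?thesis unfolding oriented_2regular_def by blast
qed

lemma oriented_2regular_arcs:
  "let E = (\<Union>c\<in>set cs. cycle_edges c) in
     A \<subseteq> E \<union> E\<inverse> \<and> (\<forall>(u, v)\<in>E. (u, v) \<in> A \<or> (v, u) \<in> A) \<and> A \<inter> A\<inverse> = {}"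
  using oriented unfolding oriented_2regular_def by (rule conjunct2[OF conjunct2])

lemma cycle_edge_oriented:
  assumes "d \<in> set cs" "(u, v) \<in> cycle_edges d"
  shows "(u, v) \<in> A \<or> (v, u) \<in> A"
proof -
  have "\<forall>(u, v)\<in>(\<Union>c\<in>set cs. cycle_edges c). (u, v) \<in> A \<or> (v, u) \<in> A"
    using oriented_2regular_arcs unfolding Let_def by (rule conjunct1[OF conjunct2])
  with assms show ?thesis by blast
qed

lemma arc_asym: "(u, v) \<in> A \<Longrightarrow> (v, u) \<notin> A"
proof -
  have "A \<inter> A\<inverse> = {}"
    using oriented_2regular_arcs unfolding Let_def by (rule conjunct2[OF conjunct2])
  then show "(u, v) \<in> A \<Longrightarrow> (v, u) \<notin> A" by blast
qed

lemma arc_in_cycle_edges: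
  assumes "(u, v) \<in> A"
  obtains d where "d \<in> set cs" "(u, v) \<in> cycle_edges d \<union> (cycle_edges d)\<inverse>"
proof -
  have "A \<subseteq> (\<Union>c\<in>set cs. cycle_edges c) \<union> (\<Union>c\<in>set cs. cycle_edges c)\<inverse>"
    using oriented_2regular_arcs unfolding Let_def by (rule conjunct1)
  with assms that show thesis by blast
qed

lemma cycle_vertex_in_verts: "c \<in> set cs \<Longrightarrow> cycle_vertex c i \<in> verts cs"
  unfolding verts_def using cycle_vertex_in_set cycle_nonempty by blast

lemma cycle_arc_orientation:
  "c \<in> set cs \<Longrightarrow>
     (cycle_vertex c i, cycle_vertex c (i + 1)) \<in> A \<or> (cycle_vertex c (i + 1), cycle_vertex c i) \<in> A"
  using cycle_edge_oriented cycle_edges_eq_range cycle_nonempty by blast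

lemma out_arc_cycle_vertex:
  assumes c: "c \<in> set cs" and arc: "(cycle_vertex c i, w) \<in> A"
  shows "w = cycle_vertex c (i + 1) \<or> w = cycle_vertex c (i - 1)"
proof -
  obtain d where d: "d \<in> set cs" and e: "(cycle_vertex c i, w) \<in> cycle_edges d \<union> (cycle_edges d)\<inverse>"
    using arc by (rule arc_in_cycle_edges)
  from e have "(cycle_vertex c i, w) \<in> range (\<lambda>j. (cycle_vertex d j, cycle_vertex d (j + 1)))
      \<union> range (\<lambda>j. (cycle_vertex d j, cycle_vertex d (j - 1)))"
    unfolding converse_cycle_edges_eq_range[OF cycle_nonempty[OF d]]
    unfolding cycle_edges_eq_range[OF cycle_nonempty[OF d]] .
  then obtain j where j: "cycle_vertex c i = cycle_vertex d j"
    and w: "w = cycle_vertex d (j + 1) \<or> w = cycle_vertex d (j - 1)"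
    by auto
  have "d = c"
    using cycles_eq_if_common_vertex[OF d c] j cycle_vertex_in_set[OF cycle_nonempty[OF c], of i]
      cycle_vertex_in_set[OF cycle_nonempty[OF d], of j] by simp
  have "cycle_vertex c (j + m) = cycle_vertex c (i + m)" for m
    using cycle_vertex_add_cong j cycle_distinct_length(1)[OF c] cycle_nonempty[OF c]
    unfolding \<open>d = c\<close> by metis
  from this[of 1] this[of "-1"] show ?thesis using w unfolding \<open>d = c\<close> by simp
qed

lemma out_arc_cycle_vertex_cases:
  assumes "c \<in> set cs" "(cycle_vertex c i, w) \<in> A"
  obtains "w = cycle_vertex c (i + 1)" "(cycle_vertex c i, cycle_vertex c (i + 1)) \<in> A"
    | "w = cycle_vertex c (i - 1)" "(cycle_vertex c (i - 1), cycle_vertex c i) \<notin> A"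
  using out_arc_cycle_vertex[OF assms] assms(2) arc_asym by fastforce

lemma no_out_arc_at_orientation_change:
  assumes c: "c \<in> set cs"
    and "forward_arc A c s" and "\<not> forward_arc A c (s + 1)"
  shows "A `` {cycle_vertex c (s + 1)} = {}"
proof -
  have "(cycle_vertex c (s + 1), w) \<notin> A" for w
  proof
    assume "(cycle_vertex c (s + 1), w) \<in> A"
    then show False
      by (rule out_arc_cycle_vertex_cases[OF c])
        (use assms in \<open>simp_all add: forward_arc_def add.assoc\<close>)
  qed
  then show ?thesis by blast
qed

lemma out_arcs_if_forward_arc_in:
  assumes c: "c \<in> set cs" and "forward_arc A c (i - 1)"
  shows "A `` {cycle_vertex c i} \<subseteq> {cycle_vertex c (i + 1)}"
proof
  fix w assume "w \<in> A `` {cycle_vertex c i}"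
  then have "(cycle_vertex c i, w) \<in> A" by blast
  then show "w \<in> {cycle_vertex c (i + 1)}"
    by (rule out_arc_cycle_vertex_cases[OF c]) (use assms(2) in \<open>simp_all add: forward_arc_def\<close>)
qed

lemma out_arcs_if_not_forward_arc_out:
  assumes c: "c \<in> set cs" and "\<not> forward_arc A c i"
  shows "A `` {cycle_vertex c i} \<subseteq> {cycle_vertex c (i - 1)}"
proof
  fix w assume "w \<in> A `` {cycle_vertex c i}"
  then have "(cycle_vertex c i, w) \<in> A" by blast
  then show "w \<in> {cycle_vertex c (i - 1)}"
    by (rule out_arc_cycle_vertex_cases[OF c]) (use assms(2) in \<open>simp_all add: forward_arc_def\<close>)
qed

lemma ex_orientation_change:
  assumes c: "c \<in> set cs" and not_uni: "\<not> (cycle_edges c \<subseteq> A \<or> (cycle_edges c)\<inverse> \<subseteq> A)"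
  obtains s where "forward_arc A c s" "\<not> forward_arc A c (s + 1)"
proof -
  let ?n = "int (length c)"
  obtain i where i: "\<not> forward_arc A c i"
    using not_uni unfolding cycle_edges_eq_range[OF cycle_nonempty[OF c]] forward_arc_def by blast
  obtain j where j: "forward_arc A c j"
    using not_uni cycle_arc_orientation[OF c]
    unfolding cycle_edges_eq_range[OF cycle_nonempty[OF c]] forward_arc_def by blast
  have "\<not> forward_arc A c (i + \<bar>j - i\<bar> * ?n)" using i forward_arc_periodic[of A c i "\<bar>j - i\<bar>"] by simp
  moreover have "j \<le> i + \<bar>j - i\<bar> * ?n"
  proof -
    have "1 \<le> ?n" using cycle_nonempty[OF c] by (simp add: Suc_le_eq)
    then have "\<bar>j - i\<bar> \<le> \<bar>j - i\<bar> * ?n" by (simp add: mult_le_cancel_left1)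
    then show ?thesis by linarith
  qed
  ultimately obtain s where "forward_arc A c s" "\<not> forward_arc A c (s + 1)"
    using ex_true_false_transition[of "forward_arc A c" j] j by blast
  then show thesis by (rule that)
qed

lemma two_vertices_without_2walks:
  assumes c: "c \<in> set cs" and not_uni: "\<not> (cycle_edges c \<subseteq> A \<or> (cycle_edges c)\<inverse> \<subseteq> A)"
  obtains x y where "x \<in> set c" "y \<in> set c" "x \<noteq> y" "A `` A `` {x} = {}" "A `` A `` {y} = {}"
proof -
  let ?v = "cycle_vertex c" and ?n = "int (length c)" and ?fwd = "forward_arc A c"
  have n: "3 \<le> ?n" using cycle_distinct_length(2)[OF c] by simp
  have dist: "?v i \<noteq> ?v j" if "0 < j - i" "j - i < ?n" for i j
    using cycle_vertex_neq[OF cycle_distinct_length(1)[OF c] that] .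
  have in_c: "?v i \<in> set c" for i using cycle_vertex_in_set[OF cycle_nonempty[OF c]] .
  obtain s where s: "?fwd s" "\<not> ?fwd (s + 1)" using ex_orientation_change[OF c not_uni] .
  have sink: "A `` {?v (s + 1)} = {}" by (rule no_out_arc_at_orientation_change[OF c s])
  then have x: "A `` A `` {?v (s + 1)} = {}" by simp
  consider "?fwd (s - 1)" | "\<not> ?fwd (s + 2)" | "\<not> ?fwd (s - 1)" "?fwd (s + 2)" by blast
  then show ?thesis
  proof cases
    case 1
    then have "A `` {?v s} \<subseteq> {?v (s + 1)}" by (rule out_arcs_if_forward_arc_in[OF c])
    then have "A `` A `` {?v s} = {}" using sink by blast
    moreover have "?v s \<noteq> ?v (s + 1)" using dist n by simp
    ultimately show ?thesis using that in_c x by blast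
  next
    case 2
    have "A `` {?v (s + 2)} \<subseteq> {?v (s + 1)}"
      using out_arcs_if_not_forward_arc_out[OF c 2] by (simp add: add.commute)
    then have "A `` A `` {?v (s + 2)} = {}" using sink by blast
    moreover have "?v (s + 1) \<noteq> ?v (s + 2)" using dist n by simp
    ultimately show ?thesis using that in_c x by blast
  next
    case 3
    \<comment> \<open>The orientation switches back to backward somewhere between s + 2 and s - 1 + n.\<close>
    have "\<not> ?fwd (s - 1 + ?n)" using 3(1) forward_arc_periodic[of A c "s - 1" 1] by simp
    then obtain t where t: "s + 2 \<le> t" "t < s - 1 + ?n" "?fwd t" "\<not> ?fwd (t + 1)"
      using ex_true_false_transition[of ?fwd "s + 2" "s - 1 + ?n"] 3(2) n by auto
    have "?v (s + 1) \<noteq> ?v (t + 1)" using dist t(1,2) by simp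
    moreover have "A `` A `` {?v (t + 1)} = {}"
      using no_out_arc_at_orientation_change[OF c t(3,4)] by simp
    ultimately show ?thesis using that in_c x by blast
  qed
qed

lemma not_D_antimagic_if_not_unidirectional:
  assumes "\<not> unidirectional cs A" and "\<forall>d\<in>D. 2 \<le> d"
  shows "\<not> D_antimagic (verts cs) A D"
proof -
  obtain c where c: "c \<in> set cs" "\<not> (cycle_edges c \<subseteq> A \<or> (cycle_edges c)\<inverse> \<subseteq> A)"
    using assms(1) unfolding unidirectional_def by blast
  obtain x y where "x \<in> set c" "y \<in> set c" "x \<noteq> y" "A `` A `` {x} = {}" "A `` A `` {y} = {}"
    using two_vertices_without_2walks[OF c] .
  moreover have "x \<in> verts cs" "y \<in> verts cs" using c(1) calculation(1,2) unfolding verts_def by blast+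
  ultimately show ?thesis
    using not_D_antimagic_if_two_empty_neighbourhoods D_neighbourhood_eq_empty_if_no_2walk assms(2)
    by metis
qed

lemma arc_cycle_direction:
  assumes c: "c \<in> set cs" and "cycle_edges c \<subseteq> A \<or> (cycle_edges c)\<inverse> \<subseteq> A"
  shows "(cycle_vertex c i, cycle_vertex c (i + cycle_direction A c)) \<in> A"
proof (cases "cycle_edges c \<subseteq> A")
  case True
  then show ?thesis unfolding cycle_direction_def cycle_edges_eq_range[OF cycle_nonempty[OF c]] by auto
next
  case False
  then have "(cycle_edges c)\<inverse> \<subseteq> A" using assms(2) by blast
  then show ?thesis
    using False unfolding cycle_direction_def converse_cycle_edges_eq_range[OF cycle_nonempty[OF c]] by auto
qed

context
  fixes c :: "'a list" and e :: int
  assumes c: "c \<in> set cs" and e: "e \<in> {1, -1}"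
    and directed: "\<And>i. (cycle_vertex c i, cycle_vertex c (i + e)) \<in> A"
begin

lemma out_arc_directed_cycle: "(cycle_vertex c i, w) \<in> A \<longleftrightarrow> w = cycle_vertex c (i + e)"
proof
  assume arc: "(cycle_vertex c i, w) \<in> A"
  have "(cycle_vertex c (i - e), cycle_vertex c i) \<in> A" using directed[of "i - e"] by simp
  then have "w \<noteq> cycle_vertex c (i - e)" using arc arc_asym by blast
  then show "w = cycle_vertex c (i + e)" using out_arc_cycle_vertex[OF c arc] e by auto
qed (use directed in simp)

lemma relpow_directed_cycle: "(cycle_vertex c i, w) \<in> A ^^ m \<longleftrightarrow> w = cycle_vertex c (i + int m * e)"
proof (induction m arbitrary: w)
  case (Suc m)
  have "(cycle_vertex c i, w) \<in> A ^^ Suc m \<longleftrightarrow> (cycle_vertex c (i + int m * e), w) \<in> A"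
    using Suc.IH by auto
  also have "\<dots> \<longleftrightarrow> w = cycle_vertex c (i + int (Suc m) * e)"
    by (simp add: out_arc_directed_cycle algebra_simps)
  finally show ?case .
qed auto

lemma odist_directed_cycle:
  assumes "k < length c"
  shows "odist A (cycle_vertex c i) w = Some k \<longleftrightarrow> w = cycle_vertex c (i + int k * e)"
proof
  assume "odist A (cycle_vertex c i) w = Some k"
  then have "(cycle_vertex c i, w) \<in> A ^^ k" by (rule odist_SomeD)
  then show "w = cycle_vertex c (i + int k * e)" by (simp add: relpow_directed_cycle)
next
  assume w: "w = cycle_vertex c (i + int k * e)"
  have shorter: "(cycle_vertex c i, w) \<notin> A ^^ m" if "m < k" for m
  proof -
    have "cycle_vertex c (i + int m) \<noteq> cycle_vertex c (i + int k)"
      "cycle_vertex c (i - int k) \<noteq> cycle_vertex c (i - int m)"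
      using that assms by (simp_all add: cycle_vertex_neq[OF cycle_distinct_length(1)[OF c]])
    then have "cycle_vertex c (i + int m * e) \<noteq> cycle_vertex c (i + int k * e)"
      using e by auto
    then show ?thesis using w by (simp add: relpow_directed_cycle)
  qed
  have "(LEAST m. (cycle_vertex c i, w) \<in> A ^^ m) = k"
    using w relpow_directed_cycle shorter by (intro Least_equality) (auto simp: not_less[symmetric])
  then show "odist A (cycle_vertex c i) w = Some k"
    unfolding odist_def using w relpow_directed_cycle by auto
qed

end

lemma D_antimagic_if_unidirectional:
  assumes uni: "unidirectional cs A" and k: "\<forall>c\<in>set cs. k < length c"
  shows "D_antimagic (verts cs) A {k}"
proof -
  let ?N = "D_neighbourhood (verts cs) A {k}"
  let ?shift = "\<lambda>c i. cycle_vertex c (i + int k * cycle_direction A c)"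
  have nbhd: "?N (cycle_vertex c i) = {?shift c i}" if c: "c \<in> set cs" for c i
  proof -
    have e: "cycle_direction A c \<in> {1, -1}" unfolding cycle_direction_def by simp
    have directed: "(cycle_vertex c j, cycle_vertex c (j + cycle_direction A c)) \<in> A" for j
      using arc_cycle_direction[OF c] uni c unfolding unidirectional_def by blast
    have "?N (cycle_vertex c i) = {y \<in> verts cs. odist A (cycle_vertex c i) y = Some k}"
      unfolding D_neighbourhood_def by simp
    also have "\<dots> = {?shift c i}"
      using odist_directed_cycle[OF c e directed] k c cycle_vertex_in_verts[OF c] by auto
    finally show ?thesis .
  qed
  have verts: "\<exists>c\<in>set cs. \<exists>i. v = cycle_vertex c i" if v: "v \<in> verts cs" for v
  proof -
    obtain c where "c \<in> set cs" "v \<in> set c" using v unfolding verts_def by blast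
    then show ?thesis by (meson ex_cycle_vertex_eq)
  qed
  show ?thesis
  proof (rule D_antimagic_if_singleton_neighbourhoods)
    show "finite (verts cs)" unfolding verts_def by simp
    show "\<forall>v\<in>verts cs. is_singleton (?N v)" using verts nbhd by fastforce
    show "inj_on ?N (verts cs)"
    proof (rule inj_onI)
      fix u v assume "u \<in> verts cs" "v \<in> verts cs" and eq: "?N u = ?N v"
      then obtain c d i j where c: "c \<in> set cs" "u = cycle_vertex c i"
        and d: "d \<in> set cs" "v = cycle_vertex d j"
        using verts by meson
      have shift_eq: "?shift c i = ?shift d j" using eq nbhd c d by simp
      then have "d = c"
        using cycles_eq_if_common_vertex[OF c(1) d(1)] cycle_vertex_in_set cycle_nonempty c d by metis
      then show "u = v"
        using shift_eq cycle_vertex_add_cong[of c _ _ "- int k * cycle_direction A c"] c d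
          cycle_distinct_length(1) cycle_nonempty by fastforce
    qed
  qed
qed

end

theorem mainTheorem18:
  fixes cs :: "'a list list" and A :: "('a \<times> 'a) set" and k :: nat
  assumes "oriented_2regular cs A"
    and "2 \<le> length cs"
    and "2 \<le> k"
    and "\<forall>c\<in>set cs. k \<le> length c - 1"
    and "is_distance_set (verts cs) A {k}"
  shows "D_antimagic (verts cs) A {k} \<longleftrightarrow> unidirectional cs A"
proof
  assume "D_antimagic (verts cs) A {k}"
  then show "unidirectional cs A"
    using not_D_antimagic_if_not_unidirectional[OF assms(1), of "{k}"] assms(3) by auto
next
  assume "unidirectional cs A"
  moreover have "\<forall>c\<in>set cs. k < length c"
    using assms(4) cycle_distinct_length(2)[OF assms(1)] by fastforce
  ultimately show "D_antimagic (verts cs) A {k}"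
    by (rule D_antimagic_if_unidirectional[OF assms(1)])
qed

end
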